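(* Let $F$, $H$, $X$, $\Omega$, $Q$ and the sequences $(x_k),(w_k),(w'_k),(y_k)$ be as described in the context (generated by the IneIREG method). Suppose the regularization parameters are $\eta_k=\eta_0/(k+1)^b$ for all $k\ge 0$, with $0<\eta_0\le 1$ and $0<b<1$. Suppose also that $\alpha_0\in[0,1]$ and the sequence $(\alpha_k/\eta_k)_{k\ge0}$ is nonincreasing; that $\lambda_k\in[\underline\lambda,\overline\lambda]$ for all $k\ge0$, where $0<\underline\lambda\le\overline\lambda\le 1/(L_F+\eta_0L_H)$; and that $s:=\sum_{k=0}^\infty \delta_k\eta_k^{-1}<+\infty$. For $k\ge1$ let $\Lambda_k=\sum_{j=0}^{k-1}\lambda_j$ and $\overline y_k=\Lambda_k^{-1}\sum_{j=0}^{k-1}\lambda_j y_j$. Then: (a) for all $k\ge1$, $$-B_H\,\mathrm{dist}(\overline y_k,Q)\le \mathrm{Gap}(\overline y_k,H,Q)\le \frac{1}{k^{1-b}}\Big(\frac{D_X^2}{2^{1-b}\underline\lambda\,\eta_0}\Big)+\frac1k\Big(\frac{s}{2\underline\lambda}\Big);$$ (b) for all $k\ge1$, $$0\le \mathrm{Gap}(\overline y_k,F,X)\le \frac1k\Big(\frac{D_X^2}{2\underline\lambda}\Big)+\frac1k\Big(\frac{s}{2\underline\lambda}\Big)+\frac{1}{k^b}\Big(\frac{\eta_0\overline\lambda C_HD_X}{(1-b)\underline\lambda}\Big);$$ (c) if $Q$ is $\sigma$-weakly sharp of order $\mathcal M\ge1$, then for all $k\ge1$, $$\mathrm{Gap}(\overline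 y_k,H,Q)\ge -\frac{B_H}{\sigma^{1/\mathcal M}}\Bigg(\frac1k\Big(\frac{D_X^2}{2\underline\lambda}\Big)+\frac1k\Big(\frac{s}{2\underline\lambda}\Big)+\frac{1}{k^b}\Big(\frac{\eta_0\overline\lambda C_HD_X}{(1-b)\underline\lambda}\Big)\Bigg)^{1/\mathcal M}.$$
   Context: Work in $\mathbb{R}^n$ with Euclidean inner product $\langle\cdot,\cdot\rangle$ and norm $\|\cdot\|$. The maps $F\colon \mathrm{Dom}\,F\to\mathbb{R}^n$ and $H\colon\mathrm{Dom}\,H\to\mathbb{R}^n$ are monotone and Lipschitz continuous with constants $L_F>0$ and $L_H>0$. $X$ is a nonempty compact convex set and $\Omega$ a nonempty closed convex set with $X\subset\Omega\subset\mathrm{Dom}\,F\cap\mathrm{Dom}\,H$; $P_X,P_\Omega$ denote orthogonal projections. $Q:=\{x\in X:\langle F(x),y-x\rangle\ge0\ \forall y\in X\}$ (solution set of VIP$(F,X)$) is assumed nonempty. $D_X:=\sup_{x,y\in X}\|x-y\|$, $C_H:=\sup_{x\in X}\|H(x)\|$, $B_H:=\sup_{x\in Q}\|H(x)\|$, and $\mathrm{dist}(y,Q)$ is the Euclidean distance from $y$ to $Q$. Dual gap functions: $\mathrm{Gap}(z,H,Q):=\sup_{x\in Q}\langle H(x),z-x\rangle$ and $\mathrm{Gap}(z,F,X):=\sup_{x\in X}\langle F(x),z-x\rangle$. $Q$ is $\sigma$-weakly sharp of order $\mathcal M\ge1$ ($\sigma>0$) if $\langle F(x),y-x\rangle\ge\sigma\,\mathrm{dist}(y,Q)^{\mathcal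 M}$ for all $x\in Q$, $y\in X$. IneIREG method: start with $x_0=x_{-1}\in X$; for $k=0,1,\dots$, with parameters $\alpha_k\ge0$, $\lambda_k>0$, $\eta_k>0$, set $w_k=x_k+\alpha_k(x_k-x_{k-1})$, $w'_k=P_\Omega(w_k)$, $y_k=P_X\big(w_k-\lambda_k(F(w'_k)+\eta_kH(w'_k))\big)$, $x_{k+1}=P_X\big(w_k-\lambda_k(F(y_k)+\eta_kH(y_k))\big)$. Also $\delta_k:=\alpha_k(1+\alpha_k)\|x_k-x_{k-1}\|^2$ for $k\ge0$. *)

theory Defs
  imports "HOL-Analysis.Analysis"
begin

definition monotone_op :: "'a::real_inner set \<Rightarrow> ('a \<Rightarrow> 'a) \<Rightarrow> bool" where
  "monotone_op D F \<longleftrightarrow> (\<forall>x\<in>D. \<forall>y\<in>D. inner (F x - F y) (x - y) \<ge> 0)"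

definition VI_sol :: "('a::real_inner \<Rightarrow> 'a) \<Rightarrow> 'a set \<Rightarrow> 'a set" where
  "VI_sol F X = {x \<in> X. \<forall>y\<in>X. inner (F x) (y - x) \<ge> 0}"

definition Gap :: "'a::real_inner \<Rightarrow> ('a \<Rightarrow> 'a) \<Rightarrow> 'a set \<Rightarrow> real" where
  "Gap z G S = (SUP x\<in>S. inner (G x) (z - x))"

definition weakly_sharp :: "('a::real_inner \<Rightarrow> 'a) \<Rightarrow> 'a set \<Rightarrow> 'a set \<Rightarrow> real \<Rightarrow> real \<Rightarrow> bool" where
  "weakly_sharp F X Q \<sigma> M \<longleftrightarrow>
     (\<forall>x\<in>Q. \<forall>y\<in>X. inner (F x) (y - x) \<ge> \<sigma> * (infdist y Q) powr M)"

end

theory Submission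
  imports Defs
begin

text \<open>
  The iterates satisfy an extragradient descent inequality: for every z in X,
  |x_{k+1} - z|^2 + 2 lam_k <F y_k + eta_k H y_k, y_k - z>
    <= (1 + alpha_k) |x_k - z|^2 - alpha_k |x_{k-1} - z|^2 + delta_k.
  By monotonicity both operators may be evaluated at z instead of y_k. For z in Q the F-term is
  nonnegative and is dropped after dividing by eta_k; for arbitrary z in X the H-term is at least
  -C_H D_X. Summing with weights, the distance terms telescope, because 1/eta_k is nondecreasing,
  alpha_k/eta_k is nonincreasing and alpha_0 <= 1, and dividing by Lambda_k >= k lo gives the upper
  bounds on both gap functions at the ergodic average. The lower bounds come from the
  Cauchy-Schwarz inequality, and weak sharpness turns the bound on Gap(ybar_k, F, X) into a bound
  on dist(ybar_k, Q).
\<close>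

lemma monotone_op_inner_le:
  assumes "monotone_op D G" "u \<in> D" "v \<in> D"
  shows "inner (G u) (v - u) \<le> inner (G v) (v - u)"
  using assms unfolding monotone_op_def by (fastforce simp: inner_diff_left)

lemma norm_le_SUP_norm:
  fixes G :: "'a::metric_space \<Rightarrow> 'b::real_normed_vector"
  assumes "compact X" "continuous_on X G" "S \<subseteq> X" "u \<in> S"
  shows "norm (G u) \<le> (SUP v\<in>S. norm (G v))"
proof -
  have "compact ((\<lambda>v. norm (G v)) ` X)"
    using assms by (intro compact_continuous_image continuous_intros)
  then have "bdd_above ((\<lambda>v. norm (G v)) ` S)"
    using assms(3) by (meson bdd_above_mono bounded_imp_bdd_above compact_imp_bounded image_mono)
  then show ?thesis by (rule cSUP_upper[OF assms(4)])
qed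

lemma Gap_upper:
  fixes G :: "'a::real_inner \<Rightarrow> 'a"
  assumes "compact X" "continuous_on X G" "S \<subseteq> X" "u \<in> S"
  shows "inner (G u) (z - u) \<le> Gap z G S"
proof -
  have "compact ((\<lambda>v. inner (G v) (z - v)) ` X)"
    using assms by (intro compact_continuous_image continuous_intros)
  then have "bdd_above ((\<lambda>v. inner (G v) (z - v)) ` S)"
    using assms(3) by (meson bdd_above_mono bounded_imp_bdd_above compact_imp_bounded image_mono)
  then show ?thesis unfolding Gap_def using assms(4) by (rule cSUP_upper2) simp
qed

lemma Gap_le:
  assumes "S \<noteq> {}" "\<And>u. u \<in> S \<Longrightarrow> inner (G u) (z - u) \<le> c"
  shows "Gap z G S \<le> c"
  unfolding Gap_def using assms by (rule cSUP_least)

lemma Gap_ge_neg_infdist: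
  fixes G :: "'a::real_inner \<Rightarrow> 'a"
  assumes "compact X" "continuous_on X G" "S \<subseteq> X" "S \<noteq> {}"
    and bound: "\<And>u. u \<in> S \<Longrightarrow> norm (G u) \<le> B"
  shows "- B * infdist z S \<le> Gap z G S"
proof -
  have neg_gap: "- Gap z G S \<le> B * dist z u" if "u \<in> S" for u
  proof -
    have "- Gap z G S \<le> - inner (G u) (z - u)"
      using Gap_upper[OF assms(1-3) that] by simp
    also have "\<dots> \<le> norm (G u) * norm (z - u)"
      using norm_cauchy_schwarz[of "- G u" "z - u"] by simp
    also have "\<dots> \<le> B * dist z u"
      using bound[OF that] by (simp add: dist_norm mult_right_mono)
    finally show ?thesis .
  qed
  obtain u where "u \<in> S" using assms(4) by blast
  then have "0 \<le> B" using bound norm_ge_zero order_trans by blast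
  show ?thesis
  proof (cases "B = 0")
    case True
    then show ?thesis using neg_gap[OF \<open>u \<in> S\<close>] by simp
  next
    case False
    then have "0 < B" using \<open>0 \<le> B\<close> by simp
    have "- Gap z G S / B \<le> infdist z S"
      unfolding infdist_notempty[OF assms(4)]
      using neg_gap \<open>0 < B\<close> assms(4)
      by (intro cINF_greatest) (auto simp only: pos_divide_le_eq mult.commute)
    then show ?thesis using \<open>0 < B\<close> by (simp only: pos_divide_le_eq) (simp add: mult.commute)
  qed
qed

lemma weakly_sharp_infdist_le:
  assumes "weakly_sharp F X Q \<sigma> M" "0 < \<sigma>" "0 < M" "y \<in> X" "u \<in> Q"
    and "inner (F u) (y - u) \<le> R"
  shows "infdist y Q \<le> R powr (1 / M) / \<sigma> powr (1 / M)"
proof -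
  define d where "d = infdist y Q"
  have "0 \<le> d" unfolding d_def by (rule infdist_nonneg)
  have "\<sigma> * d powr M \<le> R"
    using assms unfolding weakly_sharp_def d_def by (meson order_trans)
  then have "d powr M \<le> R / \<sigma>"
    using \<open>0 < \<sigma>\<close> by (simp add: le_divide_eq mult.commute)
  then have "(d powr M) powr (1 / M) \<le> (R / \<sigma>) powr (1 / M)"
    using \<open>0 < M\<close> by (intro powr_mono2) auto
  moreover have "(d powr M) powr (1 / M) = d"
    using \<open>0 \<le> d\<close> \<open>0 < M\<close> by (simp add: powr_powr)
  moreover have "0 \<le> R"
    using \<open>\<sigma> * d powr M \<le> R\<close> \<open>0 < \<sigma>\<close> by (smt (verit) mult_nonneg_nonneg powr_ge_zero)
  ultimately show ?thesis
    unfolding d_def using \<open>0 < \<sigma>\<close> by (simp add: powr_divide)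
qed

lemma norm_extrapolation_power2:
  fixes p q :: "'a::real_inner"
  shows "(norm ((1 + t) *\<^sub>R p - t *\<^sub>R q))\<^sup>2
    = (1 + t) * (norm p)\<^sup>2 - t * (norm q)\<^sup>2 + t * (1 + t) * (norm (p - q))\<^sup>2"
  by (simp add: power2_norm_eq_inner inner_diff inner_add inner_commute algebra_simps)

text \<open>The condition l L <= 1 lets the Lipschitz error of the extrapolation step be absorbed
  by the two projection inequalities.\<close>

lemma extragradient_step_ineq:
  fixes G :: "'a::euclidean_space \<Rightarrow> 'a"
  assumes X: "closed X" "convex X" and \<Omega>: "closed \<Omega>" "convex \<Omega>" "X \<subseteq> \<Omega>"
    and lip: "L-lipschitz_on \<Omega> G" and l: "0 \<le> l" "l * L \<le> 1"
    and y: "y = closest_point X (w - l *\<^sub>R G (closest_point \<Omega> w))"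
    and z: "z = closest_point X (w - l *\<^sub>R G y)"
    and u: "u \<in> X"
  shows "(norm (z - u))\<^sup>2 \<le> (norm (w - u))\<^sup>2 - 2 * l * inner (G y) (y - u)"
proof -
  define w' where "w' = closest_point \<Omega> w"
  have "X \<noteq> {}" "\<Omega> \<noteq> {}" using u \<Omega> by auto
  then have yX: "y \<in> X" and zX: "z \<in> X" and w'\<Omega>: "w' \<in> \<Omega>"
    using y z X \<Omega> closest_point_in_set unfolding w'_def by auto
  have proj_z: "inner (w - l *\<^sub>R G y - z) (u - z) \<le> 0"
    unfolding z using closest_point_dot[OF X(2,1) u] .
  have proj_y: "inner (w - l *\<^sub>R G w' - y) (z - y) \<le> 0"
    unfolding y w'_def using closest_point_dot[OF X(2,1) zX] .
  have y\<Omega>: "y \<in> \<Omega>" using yX \<Omega>(3) by blast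
  have "norm (w' - y) \<le> norm (w - y)"
    using closest_point_lipschitz[OF \<Omega>(2,1) \<open>\<Omega> \<noteq> {}\<close>, of w y]
    by (simp add: w'_def closest_point_self[OF y\<Omega>] dist_norm)
  have "l * inner (G w' - G y) (z - y) \<le> l * (norm (G w' - G y) * norm (z - y))"
    using l(1) by (intro mult_left_mono norm_cauchy_schwarz)
  also have "\<dots> \<le> l * (L * norm (w' - y) * norm (z - y))"
    using lipschitz_on_normD[OF lip w'\<Omega> y\<Omega>] l(1) by (intro mult_left_mono mult_right_mono) auto
  also have "\<dots> \<le> l * L * (norm (w - y) * norm (z - y))"
    using \<open>norm (w' - y) \<le> norm (w - y)\<close> l(1) lipschitz_on_nonneg[OF lip]
    by (simp add: mult.assoc mult_left_mono mult_right_mono)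
  also have "\<dots> \<le> norm (w - y) * norm (z - y)"
    using l lipschitz_on_nonneg[OF lip] by (intro mult_left_le_one_le) auto
  also have "\<dots> \<le> ((norm (w - y))\<^sup>2 + (norm (z - y))\<^sup>2) / 2"
    using sum_squares_bound[of "norm (w - y)" "norm (z - y)"] by (simp add: power2_eq_square)
  finally have lip_term: "2 * l * inner (G w' - G y) (z - y) \<le> (norm (w - y))\<^sup>2 + (norm (z - y))\<^sup>2"
    by simp
  have "(norm (z - u))\<^sup>2 = (norm (w - u))\<^sup>2 - 2 * l * inner (G y) (y - u)
      - (norm (w - y))\<^sup>2 - (norm (z - y))\<^sup>2 + 2 * l * inner (G w' - G y) (z - y)
      + 2 * inner (w - l *\<^sub>R G y - z) (u - z) + 2 * inner (w - l *\<^sub>R G w' - y) (z - y)"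
    by (simp add: power2_norm_eq_inner inner_diff inner_add inner_commute algebra_simps)
  then show ?thesis using proj_z proj_y lip_term by linarith
qed

lemma telescoping_inertial_sum_le:
  fixes a c e :: "nat \<Rightarrow> real"
  assumes a: "\<And>j. 0 \<le> a j \<and> a j \<le> D"
    and c: "\<And>j. c j \<le> c (Suc j)"
    and e: "\<And>j. e (Suc j) \<le> e j" "\<And>j. 0 \<le> e j"
    and ce: "e 0 \<le> c 0"
  shows "(\<Sum>j<n. c j * (a j - a (Suc j)) + e j * (a j - a (j - 1))) \<le> c (n - 1) * D"
proof -
  have partial: "(\<Sum>j<Suc m. c j * (a j - a (Suc j)) + e j * (a j - a (j - 1)))
      + c m * a (Suc m) - e m * a m \<le> (c m - e m) * D" for m
  proof (induction m)
    case 0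
    have "(c 0 - e 0) * a 0 \<le> (c 0 - e 0) * D" using a ce by (intro mult_left_mono) auto
    then show ?case by (simp add: algebra_simps)
  next
    case (Suc m)
    have "(c (Suc m) - c m) * a (Suc m) \<le> (c (Suc m) - c m) * D"
      using a c by (intro mult_left_mono) auto
    moreover have "(e m - e (Suc m)) * a m \<le> (e m - e (Suc m)) * D"
      using a e by (intro mult_left_mono) auto
    ultimately show ?case using Suc.IH by (simp add: algebra_simps)
  qed
  have c_nonneg: "0 \<le> c m" for m
    using ce e(2)[of 0] lift_Suc_mono_le[of c 0 m, OF c] by simp
  show ?thesis
  proof (cases n)
    case 0
    then show ?thesis using c_nonneg a[of 0] by simp
  next
    case (Suc m)
    have "e m * a m \<le> e m * D" using a e by (intro mult_left_mono) auto
    moreover have "0 \<le> c m * a (Suc m)" using c_nonneg a by simp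
    ultimately show ?thesis using partial[of m] Suc by (simp add: algebra_simps)
  qed
qed

text \<open>At k = 0 truncated subtraction gives x (k - 1) = x 0, which is the convention x_{-1} = x_0.\<close>

locale ineireg =
  fixes F H :: "'a::euclidean_space \<Rightarrow> 'a"
    and DF DH X \<Omega> :: "'a set"
    and LF LH :: real
    and \<alpha> lam \<eta> :: "nat \<Rightarrow> real"
    and x w w' y :: "nat \<Rightarrow> 'a"
  assumes monoF: "monotone_op DF F" and monoH: "monotone_op DH H"
    and lipF: "LF-lipschitz_on DF F" and lipH: "LH-lipschitz_on DH H"
    and X: "compact X" "convex X"
    and \<Omega>: "closed \<Omega>" "convex \<Omega>"
    and sub: "X \<subseteq> \<Omega>" "\<Omega> \<subseteq> DF \<inter> DH"
    and x0: "x 0 \<in> X"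
    and w_def: "\<And>k. w k = x k + \<alpha> k *\<^sub>R (x k - x (k - 1))"
    and w'_def: "\<And>k. w' k = closest_point \<Omega> (w k)"
    and y_def: "\<And>k. y k = closest_point X (w k - lam k *\<^sub>R (F (w' k) + \<eta> k *\<^sub>R H (w' k)))"
    and x_def: "\<And>k. x (Suc k) = closest_point X (w k - lam k *\<^sub>R (F (y k) + \<eta> k *\<^sub>R H (y k)))"
    and alpha_nonneg: "\<And>k. 0 \<le> \<alpha> k"
    and lam_pos: "\<And>k. 0 < lam k"
    and eta_pos: "\<And>k. 0 < \<eta> k"
    and step_size: "\<And>k. lam k * (LF + \<eta> k * LH) \<le> 1"
begin

definition delta :: "nat \<Rightarrow> real" where
  "delta k = \<alpha> k * (1 + \<alpha> k) * (norm (x k - x (k - 1)))\<^sup>2"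

definition inertia_sum :: real where
  "inertia_sum = (\<Sum>k. delta k / \<eta> k)"

definition ybar :: "nat \<Rightarrow> 'a" where
  "ybar k = (1 / (\<Sum>j<k. lam j)) *\<^sub>R (\<Sum>j<k. lam j *\<^sub>R y j)"

lemma delta_nonneg: "0 \<le> delta k"
  unfolding delta_def using alpha_nonneg[of k] by simp

lemma sum_delta_le_inertia_sum:
  assumes "summable (\<lambda>k. delta k / \<eta> k)"
  shows "(\<Sum>j<k. delta j / \<eta> j) \<le> inertia_sum"
  unfolding inertia_sum_def
  using assms delta_nonneg eta_pos by (intro sum_le_suminf) (auto intro: divide_nonneg_pos)

lemma x_in_X: "x k \<in> X"
  using x0 x_def closest_point_in_set[OF compact_imp_closed[OF X(1)]] by (cases k) auto

lemma y_in_X: "y k \<in> X"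
  unfolding y_def using closest_point_in_set[OF compact_imp_closed[OF X(1)]] x_in_X by blast

lemma Q_subset_X: "VI_sol F X \<subseteq> X"
  unfolding VI_sol_def by blast

lemma norm_diff_le_diameter: "u \<in> X \<Longrightarrow> v \<in> X \<Longrightarrow> norm (u - v) \<le> diameter X"
  using diameter_bounded_bound[OF compact_imp_bounded[OF X(1)]] by (simp add: dist_norm)

lemma norm_x_diff_power2_le:
  "z \<in> X \<Longrightarrow> 0 \<le> (norm (x j - z))\<^sup>2 \<and> (norm (x j - z))\<^sup>2 \<le> (diameter X)\<^sup>2"
  using norm_diff_le_diameter[OF x_in_X] by (simp add: power_mono)

lemma continuous_on_F: "continuous_on X F"
  using lipschitz_on_continuous_on[OF lipF] sub continuous_on_subset by blast

lemma continuous_on_H: "continuous_on X H"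
  using lipschitz_on_continuous_on[OF lipH] sub continuous_on_subset by blast

lemma F_monotone_on_X: "u \<in> X \<Longrightarrow> v \<in> X \<Longrightarrow> inner (F u) (v - u) \<le> inner (F v) (v - u)"
  using monotone_op_inner_le[OF monoF] sub by blast

lemma H_monotone_on_X: "u \<in> X \<Longrightarrow> v \<in> X \<Longrightarrow> inner (H u) (v - u) \<le> inner (H v) (v - u)"
  using monotone_op_inner_le[OF monoH] sub by blast

lemma descent_inequality:
  assumes "z \<in> X"
  shows "(norm (x (Suc k) - z))\<^sup>2 + 2 * lam k * inner (F (y k)) (y k - z)
      + 2 * lam k * (\<eta> k * inner (H (y k)) (y k - z))
    \<le> (1 + \<alpha> k) * (norm (x k - z))\<^sup>2 - \<alpha> k * (norm (x (k - 1) - z))\<^sup>2 + delta k"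
proof -
  have "(LF + \<eta> k * LH)-lipschitz_on \<Omega> (\<lambda>u. F u + \<eta> k *\<^sub>R H u)"
    using lipschitz_on_subset[OF lipF] lipschitz_on_subset[OF lipH] sub eta_pos[of k]
    by (intro lipschitz_on_add lipschitz_on_cmult_nonneg) auto
  then have "(norm (x (Suc k) - z))\<^sup>2
      \<le> (norm (w k - z))\<^sup>2 - 2 * lam k * inner (F (y k) + \<eta> k *\<^sub>R H (y k)) (y k - z)"
    using compact_imp_closed[OF X(1)] X(2) \<Omega> sub(1) lam_pos[of k] step_size[of k] assms
    by (intro extragradient_step_ineq[where w = "w k"]) (auto simp: y_def w'_def x_def less_imp_le)
  moreover have "w k - z = (1 + \<alpha> k) *\<^sub>R (x k - z) - \<alpha> k *\<^sub>R (x (k - 1) - z)"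
    using w_def[of k] by (simp add: algebra_simps)
  ultimately show ?thesis
    using norm_extrapolation_power2[of "\<alpha> k" "x k - z" "x (k - 1) - z"]
    by (simp add: delta_def inner_add_left distrib_left)
qed

lemma sum_lam_pos: "k \<ge> 1 \<Longrightarrow> 0 < (\<Sum>j<k. lam j)"
  using lam_pos by (intro sum_pos) (auto simp: lessThan_empty_iff)

lemma ybar_in_X:
  assumes "k \<ge> 1"
  shows "ybar k \<in> X"
proof -
  have "ybar k = (\<Sum>j<k. (lam j / (\<Sum>i<k. lam i)) *\<^sub>R y j)"
    unfolding ybar_def by (simp add: scaleR_sum_right)
  also have "\<dots> \<in> X"
    using sum_lam_pos[OF assms] lam_pos y_in_X
    by (intro convex_sum[OF _ X(2)]) (auto simp: sum_divide_distrib[symmetric] less_imp_le)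
  finally show ?thesis .
qed

lemma inner_ybar:
  assumes "k \<ge> 1"
  shows "(\<Sum>j<k. lam j) * inner v (ybar k - z) = (\<Sum>j<k. lam j * inner v (y j - z))"
proof -
  have "(\<Sum>j<k. lam j * inner v (y j - z))
      = inner v (\<Sum>j<k. lam j *\<^sub>R y j) - (\<Sum>j<k. lam j) * inner v z"
    by (simp add: inner_diff_right inner_sum_right right_diff_distrib sum_subtractf sum_distrib_right)
  then show ?thesis
    using sum_lam_pos[OF assms] by (simp add: ybar_def inner_diff_right right_diff_distrib)
qed

lemma ergodic_H_bound:
  assumes eta_dec: "decseq \<eta>" and alpha_eta: "decseq (\<lambda>k. \<alpha> k / \<eta> k)" and alpha0: "\<alpha> 0 \<le> 1"
    and summable: "summable (\<lambda>k. delta k / \<eta> k)" and z: "z \<in> VI_sol F X"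
  shows "2 * (\<Sum>j<k. lam j * inner (H z) (y j - z)) \<le> (diameter X)\<^sup>2 / \<eta> (k - 1) + inertia_sum"
proof -
  define a where "a j = (norm (x j - z))\<^sup>2" for j
  have zX: "z \<in> X" using z Q_subset_X by blast
  have step: "2 * (lam j * inner (H z) (y j - z))
      \<le> (1 / \<eta> j) * (a j - a (Suc j)) + (\<alpha> j / \<eta> j) * (a j - a (j - 1)) + delta j / \<eta> j" for j
  proof -
    have "0 \<le> inner (F z) (y j - z)" using z y_in_X by (simp add: VI_sol_def)
    also have "\<dots> \<le> inner (F (y j)) (y j - z)"
      using F_monotone_on_X[OF zX y_in_X] .
    finally have F_term: "0 \<le> 2 * lam j * inner (F (y j)) (y j - z)" using lam_pos[of j] by simp
    have "2 * lam j * (\<eta> j * inner (H z) (y j - z)) \<le> 2 * lam j * (\<eta> j * inner (H (y j)) (y j - z))"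
      using H_monotone_on_X[OF zX y_in_X] eta_pos[of j] lam_pos[of j] by (intro mult_left_mono) auto
    then have "\<eta> j * (2 * (lam j * inner (H z) (y j - z)))
        \<le> (1 + \<alpha> j) * a j - \<alpha> j * a (j - 1) + delta j - a (Suc j)"
      using descent_inequality[OF zX, of j] F_term unfolding a_def by (simp add: mult_ac)
    then have "2 * (lam j * inner (H z) (y j - z))
        \<le> ((1 + \<alpha> j) * a j - \<alpha> j * a (j - 1) + delta j - a (Suc j)) / \<eta> j"
      using eta_pos[of j] by (simp add: pos_le_divide_eq mult.commute)
    also have "\<dots> = (1 / \<eta> j) * (a j - a (Suc j)) + (\<alpha> j / \<eta> j) * (a j - a (j - 1)) + delta j / \<eta> j"
      using eta_pos[of j] by (simp add: field_simps)
    finally show ?thesis .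
  qed
  have "(\<Sum>j<k. (1 / \<eta> j) * (a j - a (Suc j)) + (\<alpha> j / \<eta> j) * (a j - a (j - 1)))
      \<le> (1 / \<eta> (k - 1)) * (diameter X)\<^sup>2"
  proof (rule telescoping_inertial_sum_le)
    show "0 \<le> a j \<and> a j \<le> (diameter X)\<^sup>2" for j
      unfolding a_def using norm_x_diff_power2_le[OF zX] .
    show "1 / \<eta> j \<le> 1 / \<eta> (Suc j)" for j
      using eta_pos decseq_SucD[OF eta_dec] by (intro divide_left_mono) auto
    show "\<alpha> (Suc j) / \<eta> (Suc j) \<le> \<alpha> j / \<eta> j" for j using decseq_SucD[OF alpha_eta] .
    show "0 \<le> \<alpha> j / \<eta> j" for j using alpha_nonneg eta_pos by (simp add: less_imp_le)
    show "\<alpha> 0 / \<eta> 0 \<le> 1 / \<eta> 0" using alpha0 eta_pos[of 0] by (intro divide_right_mono) auto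
  qed
  moreover have "2 * (\<Sum>j<k. lam j * inner (H z) (y j - z))
      \<le> (\<Sum>j<k. (1 / \<eta> j) * (a j - a (Suc j)) + (\<alpha> j / \<eta> j) * (a j - a (j - 1)))
        + (\<Sum>j<k. delta j / \<eta> j)"
    unfolding sum_distrib_left sum.distrib[symmetric] by (rule sum_mono) (rule step)
  ultimately show ?thesis using sum_delta_le_inertia_sum[OF summable, of k] by simp
qed

lemma ergodic_F_bound:
  assumes alpha_dec: "decseq \<alpha>" and alpha0: "\<alpha> 0 \<le> 1" and eta_le: "\<And>j. \<eta> j \<le> 1"
    and summable: "summable (\<lambda>k. delta k / \<eta> k)" and zX: "z \<in> X"
  shows "2 * (\<Sum>j<k. lam j * inner (F z) (y j - z))
    \<le> (diameter X)\<^sup>2 + inertia_sum + 2 * (SUP u\<in>X. norm (H u)) * diameter X * (\<Sum>j<k. lam j * \<eta> j)"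
proof -
  define a where "a j = (norm (x j - z))\<^sup>2" for j
  define C where "C = 2 * (SUP u\<in>X. norm (H u)) * diameter X"
  have step: "2 * (lam j * inner (F z) (y j - z))
      \<le> 1 * (a j - a (Suc j)) + \<alpha> j * (a j - a (j - 1)) + delta j / \<eta> j + C * (lam j * \<eta> j)" for j
  proof -
    have "- inner (H (y j)) (y j - z) \<le> norm (H (y j)) * norm (y j - z)"
      using norm_cauchy_schwarz[of "- H (y j)" "y j - z"] by simp
    also have "\<dots> \<le> (SUP u\<in>X. norm (H u)) * diameter X"
      using norm_le_SUP_norm[OF X(1) continuous_on_H order_refl y_in_X]
        norm_diff_le_diameter[OF y_in_X zX] by (intro mult_mono) (auto intro: order_trans[OF norm_ge_zero])
    finally have "2 * lam j * (\<eta> j * - inner (H (y j)) (y j - z))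
        \<le> 2 * lam j * (\<eta> j * ((SUP u\<in>X. norm (H u)) * diameter X))"
      using lam_pos[of j] eta_pos[of j] by (intro mult_left_mono) auto
    then have H_term: "- (2 * lam j * (\<eta> j * inner (H (y j)) (y j - z))) \<le> C * (lam j * \<eta> j)"
      unfolding C_def by (simp only: mult_minus_right mult_ac)
    have "2 * lam j * inner (F z) (y j - z) \<le> 2 * lam j * inner (F (y j)) (y j - z)"
      using F_monotone_on_X[OF zX y_in_X] lam_pos[of j] by simp
    moreover have "delta j \<le> delta j / \<eta> j"
      using delta_nonneg[of j] eta_pos[of j] eta_le[of j] by (simp add: le_divide_eq mult_left_le)
    ultimately show ?thesis
      using descent_inequality[OF zX, of j] H_term unfolding a_def by (simp only: ring_distribs mult_1)
  qed
  have "(\<Sum>j<k. 1 * (a j - a (Suc j)) + \<alpha> j * (a j - a (j - 1))) \<le> 1 * (diameter X)\<^sup>2"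
  proof (rule telescoping_inertial_sum_le)
    show "0 \<le> a j \<and> a j \<le> (diameter X)\<^sup>2" for j
      unfolding a_def using norm_x_diff_power2_le[OF zX] .
  qed (use alpha_nonneg alpha0 decseq_SucD[OF alpha_dec] in auto)
  moreover have "2 * (\<Sum>j<k. lam j * inner (F z) (y j - z))
      \<le> (\<Sum>j<k. 1 * (a j - a (Suc j)) + \<alpha> j * (a j - a (j - 1)))
        + (\<Sum>j<k. delta j / \<eta> j) + C * (\<Sum>j<k. lam j * \<eta> j)"
    unfolding sum_distrib_left sum.distrib[symmetric] by (rule sum_mono) (rule step)
  ultimately show ?thesis using sum_delta_le_inertia_sum[OF summable, of k] unfolding C_def by simp
qed

end

lemma sum_inverse_powr_le:
  fixes b :: real
  assumes b: "0 < b" "b < 1"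
  shows "(\<Sum>j<k. 1 / (real j + 1) powr b) \<le> real k powr (1 - b) / (1 - b)"
proof (induction k)
  case 0
  then show ?case by simp
next
  case (Suc k)
  define K where "K = real k + 1"
  have K: "K > 0" unfolding K_def by simp
  have young: "real k powr (1 - b) * K powr b \<le> real k + b"
  proof (cases "k = 0")
    case True
    then show ?thesis using b by simp
  next
    case False
    have "K powr b * real k powr (1 - b) \<le> b * K + (1 - b) * real k"
      by (rule Youngs_inequality_0) (use b K False in auto)
    then show ?thesis unfolding K_def by (simp add: algebra_simps)
  qed
  have "real k powr (1 - b) / (1 - b) + 1 / K powr b
      = (real k powr (1 - b) * K powr b + (1 - b)) / (K powr b * (1 - b))"
    using K b by (simp add: field_simps)
  also have "\<dots> \<le> K / (K powr b * (1 - b))"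
    using young K b unfolding K_def by (intro divide_right_mono) auto
  also have "\<dots> = K powr (1 - b) / (1 - b)"
    using K by (simp add: powr_diff)
  finally show ?case using Suc.IH unfolding K_def by (simp add: add.commute)
qed

lemma power_schedule_le:
  fixes \<eta>0 b :: real
  assumes "0 \<le> \<eta>0" "0 \<le> b"
  shows "\<eta>0 / (real k + 1) powr b \<le> \<eta>0"
  using assms by (simp add: divide_le_eq ge_one_powr_ge_zero mult_le_cancel_left1)

lemma step_size_le_one:
  fixes l hi LF LH e e0 :: real
  assumes "0 \<le> l" "l \<le> hi" "0 \<le> e" "e \<le> e0" "0 < LF" "0 < LH" "hi \<le> 1 / (LF + e0 * LH)"
  shows "l * (LF + e * LH) \<le> 1"
proof -
  have "l * (LF + e * LH) \<le> hi * (LF + e0 * LH)"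
    using assms by (intro mult_mono add_left_mono mult_right_mono) auto
  also have "\<dots> \<le> 1"
    using assms by (simp add: le_divide_eq add_pos_nonneg)
  finally show ?thesis .
qed

lemma le_divide_of_weighted_le:
  fixes g L m N :: real
  assumes "L * g \<le> N" "0 \<le> N" "0 < m" "m \<le> L"
  shows "g \<le> N / m"
proof (cases "g \<le> 0")
  case True
  then show ?thesis using assms by (meson divide_nonneg_pos order_trans)
next
  case False
  then have "m * g \<le> L * g" using assms by (intro mult_right_mono) auto
  then have "m * g \<le> N" using assms by linarith
  then show ?thesis using assms by (simp add: field_simps)
qed

locale ineireg_power = ineireg +
  fixes \<eta>0 b lo hi :: real
  assumes eta_def: "\<And>k. \<eta> k = \<eta>0 / (real k + 1) powr b"
    and eta0: "0 < \<eta>0" "\<eta>0 \<le> 1"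
    and b: "0 < b" "b < 1"
    and alpha0: "\<alpha> 0 \<le> 1"
    and alpha_eta: "decseq (\<lambda>k. \<alpha> k / \<eta> k)"
    and lam_bounds: "\<And>k. lo \<le> lam k \<and> lam k \<le> hi"
    and lo_pos: "0 < lo"
    and summable_delta: "summable (\<lambda>k. delta k / \<eta> k)"
    and Q_nonempty: "VI_sol F X \<noteq> {}"
begin

lemma eta_decseq: "decseq \<eta>"
  unfolding eta_def using eta0 b by (intro decseq_SucI divide_left_mono powr_mono2) auto

lemma eta_le_one: "\<eta> k \<le> 1"
  using power_schedule_le[of \<eta>0 b k] eta0 b unfolding eta_def by linarith

lemma alpha_decseq: "decseq \<alpha>"
proof (rule decseq_SucI)
  fix k
  have "\<alpha> (Suc k) = \<alpha> (Suc k) / \<eta> (Suc k) * \<eta> (Suc k)" using eta_pos[of "Suc k"] by simp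
  also have "\<dots> \<le> \<alpha> k / \<eta> k * \<eta> k"
    using decseq_SucD[OF alpha_eta, of k] decseq_SucD[OF eta_decseq, of k] eta_pos alpha_nonneg
    by (intro mult_mono) (auto intro: divide_nonneg_pos less_imp_le)
  also have "\<dots> = \<alpha> k" using eta_pos[of k] by simp
  finally show "\<alpha> (Suc k) \<le> \<alpha> k" .
qed

lemma sum_lam_ge: "real k * lo \<le> (\<Sum>j<k. lam j)"
  using sum_mono[of "{..<k}" "\<lambda>_. lo" lam] lam_bounds by simp

lemma sum_lam_eta_le: "(\<Sum>j<k. lam j * \<eta> j) \<le> hi * \<eta>0 * (real k powr (1 - b) / (1 - b))"
proof -
  have "(\<Sum>j<k. lam j * \<eta> j) \<le> (\<Sum>j<k. hi * \<eta> j)"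
    using lam_bounds eta_pos by (intro sum_mono mult_right_mono) (auto simp: less_imp_le)
  also have "\<dots> = hi * \<eta>0 * (\<Sum>j<k. 1 / (real j + 1) powr b)"
    by (simp add: eta_def sum_distrib_left)
  also have "\<dots> \<le> hi * \<eta>0 * (real k powr (1 - b) / (1 - b))"
    using sum_inverse_powr_le[OF b] eta0 lam_bounds[of 0] lo_pos by (intro mult_left_mono) auto
  finally show ?thesis .
qed

text \<open>The argument gives the constant 2 in place of 2 powr (1 - b) <= 2.\<close>

lemma Gap_H_upper:
  assumes k: "k \<ge> 1"
  shows "Gap (ybar k) H (VI_sol F X)
    \<le> 1 / real k powr (1 - b) * ((diameter X)\<^sup>2 / (2 powr (1 - b) * lo * \<eta>0))
      + 1 / real k * (inertia_sum / (2 * lo))"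
proof (rule Gap_le[OF Q_nonempty])
  fix z assume z: "z \<in> VI_sol F X"
  have kpos: "0 < real k" using k by simp
  have inertia_sum_nonneg: "0 \<le> inertia_sum"
    using sum_delta_le_inertia_sum[OF summable_delta, of 0] by simp
  have "(diameter X)\<^sup>2 / \<eta> (k - 1) = real k powr b / \<eta>0 * (diameter X)\<^sup>2"
    using k eta0 by (simp add: eta_def of_nat_diff)
  then have "(2 * (\<Sum>j<k. lam j)) * inner (H z) (ybar k - z)
      \<le> real k powr b / \<eta>0 * (diameter X)\<^sup>2 + inertia_sum"
    using ergodic_H_bound[OF eta_decseq alpha_eta alpha0 summable_delta z, of k] inner_ybar[OF k]
    by (simp add: mult.assoc)
  then have "inner (H z) (ybar k - z)
      \<le> (real k powr b / \<eta>0 * (diameter X)\<^sup>2 + inertia_sum) / (2 * (real k * lo))"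
    using sum_lam_ge[of k] kpos lo_pos eta0 inertia_sum_nonneg
    by (intro le_divide_of_weighted_le) auto
  also have "\<dots> = real k powr b / real k * ((diameter X)\<^sup>2 / (2 * lo * \<eta>0))
      + 1 / real k * (inertia_sum / (2 * lo))"
    using kpos lo_pos eta0 by (simp add: field_simps)
  also have "\<dots> \<le> 1 / real k powr (1 - b) * ((diameter X)\<^sup>2 / (2 powr (1 - b) * lo * \<eta>0))
      + 1 / real k * (inertia_sum / (2 * lo))"
  proof -
    have "2 powr (1 - b) \<le> 2" using b powr_mono[of "1 - b" 1 2] by simp
    then have "(diameter X)\<^sup>2 / (2 * lo * \<eta>0) \<le> (diameter X)\<^sup>2 / (2 powr (1 - b) * lo * \<eta>0)"
      using lo_pos eta0 by (intro divide_left_mono mult_right_mono mult_pos_pos) auto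
    then have "real k powr b / real k * ((diameter X)\<^sup>2 / (2 * lo * \<eta>0))
        \<le> real k powr b / real k * ((diameter X)\<^sup>2 / (2 powr (1 - b) * lo * \<eta>0))"
      using kpos by (intro mult_left_mono) auto
    moreover have "real k powr b / real k = 1 / real k powr (1 - b)"
      using kpos by (simp add: powr_diff)
    ultimately show ?thesis by simp
  qed
  finally show "inner (H z) (ybar k - z) \<le> \<dots>" .
qed

definition gap_F_rate :: "nat \<Rightarrow> real" where
  "gap_F_rate k = 1 / real k * ((diameter X)\<^sup>2 / (2 * lo)) + 1 / real k * (inertia_sum / (2 * lo))
    + 1 / real k powr b * (\<eta>0 * hi * (SUP u\<in>X. norm (H u)) * diameter X / ((1 - b) * lo))"

lemma inner_F_ybar_le_gap_F_rate:
  assumes k: "k \<ge> 1" and z: "z \<in> X"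
  shows "inner (F z) (ybar k - z) \<le> gap_F_rate k"
proof -
  define C where "C = (SUP u\<in>X. norm (H u))"
  have kpos: "0 < real k" using k by simp
  have "0 \<le> C" unfolding C_def
    using norm_le_SUP_norm[OF X(1) continuous_on_H order_refl z] norm_ge_zero order_trans by blast
  moreover have "0 \<le> diameter X" using diameter_ge_0[OF compact_imp_bounded[OF X(1)]] .
  moreover have "0 \<le> inertia_sum"
    using sum_delta_le_inertia_sum[OF summable_delta, of 0] by simp
  ultimately have N_nonneg: "0 \<le> (diameter X)\<^sup>2 + inertia_sum
      + 2 * C * diameter X * (hi * \<eta>0 * (real k powr (1 - b) / (1 - b)))"
    using lam_bounds[of 0] lo_pos eta0 b by simp
  have "2 * C * diameter X * (\<Sum>j<k. lam j * \<eta> j)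
      \<le> 2 * C * diameter X * (hi * \<eta>0 * (real k powr (1 - b) / (1 - b)))"
    using sum_lam_eta_le \<open>0 \<le> C\<close> \<open>0 \<le> diameter X\<close> by (intro mult_left_mono) auto
  then have "(2 * (\<Sum>j<k. lam j)) * inner (F z) (ybar k - z) \<le> (diameter X)\<^sup>2 + inertia_sum
      + 2 * C * diameter X * (hi * \<eta>0 * (real k powr (1 - b) / (1 - b)))"
    using ergodic_F_bound[OF alpha_decseq alpha0 eta_le_one summable_delta z, of k] inner_ybar[OF k]
    unfolding C_def by (simp add: mult.assoc)
  then have "inner (F z) (ybar k - z) \<le> ((diameter X)\<^sup>2 + inertia_sum
      + 2 * C * diameter X * (hi * \<eta>0 * (real k powr (1 - b) / (1 - b)))) / (2 * (real k * lo))"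
    using sum_lam_ge[of k] kpos lo_pos N_nonneg by (intro le_divide_of_weighted_le) auto
  also have "\<dots> = gap_F_rate k"
  proof -
    have k_powr: "real k powr (1 - b) = real k / real k powr b" using kpos by (simp add: powr_diff)
    have "0 < real k powr b" using kpos by simp
    then show ?thesis
      unfolding gap_F_rate_def C_def[symmetric] k_powr using kpos lo_pos b by (simp add: field_simps)
  qed
  finally show ?thesis .
qed

lemma Gap_F_bounds:
  assumes "k \<ge> 1"
  shows "0 \<le> Gap (ybar k) F X \<and> Gap (ybar k) F X \<le> gap_F_rate k"
  using Gap_upper[OF X(1) continuous_on_F order_refl ybar_in_X[OF assms], of "ybar k"]
    Gap_le[of X F "ybar k"] inner_F_ybar_le_gap_F_rate[OF assms] ybar_in_X[OF assms]
  by auto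

lemma Gap_H_lower:
  "- (SUP u\<in>VI_sol F X. norm (H u)) * infdist z (VI_sol F X) \<le> Gap z H (VI_sol F X)"
  using Gap_ge_neg_infdist[OF X(1) continuous_on_H Q_subset_X Q_nonempty
      norm_le_SUP_norm[OF X(1) continuous_on_H Q_subset_X]] .

lemma Gap_H_lower_weakly_sharp:
  assumes "weakly_sharp F X (VI_sol F X) \<sigma> M" "0 < \<sigma>" "1 \<le> M" "k \<ge> 1"
  shows "- ((SUP u\<in>VI_sol F X. norm (H u)) / \<sigma> powr (1 / M)) * gap_F_rate k powr (1 / M)
    \<le> Gap (ybar k) H (VI_sol F X)"
proof -
  define B where "B = (SUP u\<in>VI_sol F X. norm (H u))"
  obtain u where u: "u \<in> VI_sol F X" using Q_nonempty by blast
  then have uX: "u \<in> X" using Q_subset_X by blast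
  have "0 \<le> B" unfolding B_def
    using norm_le_SUP_norm[OF X(1) continuous_on_H Q_subset_X u] norm_ge_zero order_trans by blast
  have "infdist (ybar k) (VI_sol F X) \<le> gap_F_rate k powr (1 / M) / \<sigma> powr (1 / M)"
    using weakly_sharp_infdist_le[OF assms(1,2) _ ybar_in_X[OF assms(4)] u
        inner_F_ybar_le_gap_F_rate[OF assms(4) uX]] assms(3) by simp
  then have "- (B / \<sigma> powr (1 / M)) * gap_F_rate k powr (1 / M)
      \<le> - B * infdist (ybar k) (VI_sol F X)"
    using \<open>0 \<le> B\<close> mult_left_mono by fastforce
  also have "\<dots> \<le> Gap (ybar k) H (VI_sol F X)" using Gap_H_lower unfolding B_def .
  finally show ?thesis unfolding B_def .
qed

end

theorem theorem3p8:
  fixes F H :: "'a::euclidean_space \<Rightarrow> 'a"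
    and DF DH X \<Omega> :: "'a set"
    and LF LH \<eta>0 b lo hi :: real
    and \<alpha> lam \<eta> :: "nat \<Rightarrow> real"
    and x w w' y :: "nat \<Rightarrow> 'a"
  assumes monoF: "monotone_op DF F" and monoH: "monotone_op DH H"
    and LF_pos: "LF > 0" and LH_pos: "LH > 0"
    and lipF: "LF-lipschitz_on DF F" and lipH: "LH-lipschitz_on DH H"
    and X: "compact X" "convex X" "X \<noteq> {}"
    and \<Omega>: "closed \<Omega>" "convex \<Omega>" "\<Omega> \<noteq> {}"
    and sub: "X \<subseteq> \<Omega>" "\<Omega> \<subseteq> DF \<inter> DH"
    and Qne: "VI_sol F X \<noteq> {}"
    and x0: "x 0 \<in> X"
    and w_def: "\<And>k. w k = x k + \<alpha> k *\<^sub>R (x k - (if k = 0 then x 0 else x (k - 1)))"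
    and w'_def: "\<And>k. w' k = closest_point \<Omega> (w k)"
    and y_def: "\<And>k. y k = closest_point X (w k - lam k *\<^sub>R (F (w' k) + \<eta> k *\<^sub>R H (w' k)))"
    and x_def: "\<And>k. x (Suc k) = closest_point X (w k - lam k *\<^sub>R (F (y k) + \<eta> k *\<^sub>R H (y k)))"
    and eta_def: "\<And>k. \<eta> k = \<eta>0 / (real k + 1) powr b"
    and eta0: "0 < \<eta>0" "\<eta>0 \<le> 1"
    and b: "0 < b" "b < 1"
    and alpha_nonneg: "\<And>k. \<alpha> k \<ge> 0"
    and alpha0: "\<alpha> 0 \<le> 1"
    and alpha_eta: "decseq (\<lambda>k. \<alpha> k / \<eta> k)"
    and lam: "\<And>k. lo \<le> lam k \<and> lam k \<le> hi"
    and lo: "0 < lo" "lo \<le> hi" and hi: "hi \<le> 1 / (LF + \<eta>0 * LH)"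
    and summ: "summable (\<lambda>k. \<alpha> k * (1 + \<alpha> k) * (norm (x k - (if k = 0 then x 0 else x (k - 1))))\<^sup>2 / \<eta> k)"
  shows
    "let Q = VI_sol F X;
         DX = diameter X;
         CH = (SUP z\<in>X. norm (H z));
         BH = (SUP z\<in>Q. norm (H z));
         s = (\<Sum>k. \<alpha> k * (1 + \<alpha> k) * (norm (x k - (if k = 0 then x 0 else x (k - 1))))\<^sup>2 / \<eta> k);
         Lam = (\<lambda>k. \<Sum>j<k. lam j);
         ybar = (\<lambda>k. (1 / Lam k) *\<^sub>R (\<Sum>j<k. lam j *\<^sub>R y j));
         R = (\<lambda>k::nat. (1 / real k) * (DX\<^sup>2 / (2 * lo)) + (1 / real k) * (s / (2 * lo))
                      + (1 / real k powr b) * (\<eta>0 * hi * CH * DX / ((1 - b) * lo)))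
     in (\<forall>k\<ge>1.
           - BH * infdist (ybar k) Q \<le> Gap (ybar k) H Q \<and>
           Gap (ybar k) H Q \<le> (1 / real k powr (1 - b)) * (DX\<^sup>2 / (2 powr (1 - b) * lo * \<eta>0))
                                + (1 / real k) * (s / (2 * lo))) \<and>
        (\<forall>k\<ge>1. 0 \<le> Gap (ybar k) F X \<and> Gap (ybar k) F X \<le> R k) \<and>
        (\<forall>\<sigma> M. \<sigma> > 0 \<longrightarrow> M \<ge> 1 \<longrightarrow> weakly_sharp F X Q \<sigma> M \<longrightarrow>
           (\<forall>k\<ge>1. Gap (ybar k) H Q \<ge> - (BH / \<sigma> powr (1 / M)) * (R k) powr (1 / M)))"
proof -
  have prev: "(if k = 0 then x 0 else x (k - 1)) = x (k - 1)" for k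
    by simp
  have eta_pos: "0 < \<eta> k" for k
    using eta_def eta0 by simp
  have lam_pos: "0 < lam k" for k
    using lam[of k] lo by linarith
  have "\<eta> k \<le> \<eta>0" for k
    using power_schedule_le[of \<eta>0 b k] eta0 b eta_def[of k] by simp
  then have step_size: "lam k * (LF + \<eta> k * LH) \<le> 1" for k
    using lam[of k] lam_pos[of k] eta_pos[of k]
    by (intro step_size_le_one[OF _ _ _ _ LF_pos LH_pos hi]) auto
  interpret ineireg F H DF DH X \<Omega> LF LH \<alpha> lam \<eta> x w w' y
  proof unfold_locales
    show "w k = x k + \<alpha> k *\<^sub>R (x k - x (k - 1))" for k
      using w_def[of k] unfolding prev .
  qed (rule assms eta_pos lam_pos step_size)+
  interpret ineireg_power F H DF DH X \<Omega> LF LH \<alpha> lam \<eta> x w w' y \<eta>0 b lo hi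
  proof (intro ineireg_power.intro ineireg_axioms ineireg_power_axioms.intro)
    show "summable (\<lambda>k. delta k / \<eta> k)"
      using summ unfolding prev delta_def .
  qed (rule assms)+
  show ?thesis
    using Gap_H_lower Gap_H_upper Gap_F_bounds Gap_H_lower_weakly_sharp
    unfolding Let_def prev gap_F_rate_def inertia_sum_def delta_def ybar_def
    by simp
qed

end
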